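(* Let $q$ be a prime power with $\gcd(3,q)=1$. Let $\omega\in\overline{\mathbb{F}}_q$ satisfy $\omega^2+\omega+1=0$, and let $\rho(X)=(\omega X+1)/(X+\omega)$, viewed as a map on $\mathbb{P}^1(\overline{\mathbb{F}}_q)$. Then: (i) if $q\equiv1\pmod 3$, then $\rho$ permutes both $\mathbb{P}^1(\mathbb{F}_q)$ and $\mu_{q+1}$; (ii) if $q\equiv 2\pmod 3$, then $\rho$ maps $\mathbb{P}^1(\mathbb{F}_q)$ onto $\mu_{q+1}$ and maps $\mu_{q+1}$ onto $\mathbb{P}^1(\mathbb{F}_q)$; (iii) if $q$ is even, then $\rho$ is an involution, i.e. $\rho^{-1}=\rho$.
   Context: $\overline{\mathbb{F}}_q$ is an algebraic closure of $\mathbb{F}_q$. For a subfield $K$, $\mathbb{P}^1(K)=K\cup\{\infty\}$. $\mu_{q+1}$ is the set of $(q+1)$-th roots of unity in $\overline{\mathbb{F}}_q$. *)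

theory Defs
  imports "HOL-Computational_Algebra.Polynomial"
begin

text \<open>Points of the projective line P^1(K) over a field K are represented as
  K option: Some x is the affine point x, None is the point at infinity.\<close>

definition rho :: "'a::field \<Rightarrow> 'a option \<Rightarrow> 'a option" where
  "rho \<omega> P = (case P of
       None \<Rightarrow> Some \<omega>
     | Some x \<Rightarrow> (if x + \<omega> = 0 then None else Some ((\<omega> * x + 1) / (x + \<omega>))))"

text \<open>P^1(F_q) inside P^1 of an algebraic closure: F_q is the set of roots of X^q - X.\<close>
definition P1_Fq :: "nat \<Rightarrow> 'a::field option set" where
  "P1_Fq q = insert None (Some ` {x. x ^ q = x})"

definition mu :: "nat \<Rightarrow> 'a::field option set" where
  "mu q = Some ` {x. x ^ (q + 1) = 1}"

end

theory Submission
  imports Defs "HOL-Computational_Algebra.Primes"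
begin

(* Extend x -> x^q to P^1 coordinatewise. Because it is additive, it twists Moebius maps by
   raising their coefficients: Frob (rho_a P) = rho_(a^q) (Frob P). Now P^1(F_q) is the fixed set
   of Frob and mu_(q+1) is the set where Frob agrees with the inversion P -> 1/P, which commutes
   with rho_a. If q = 1 mod 3 then omega^q = omega, so rho_omega preserves both sets; if
   q = 2 mod 3 then omega^q = 1/omega and rho_(1/a) = rho_a o inversion, so rho_omega swaps
   them. Surjectivity and the involution property come from rho_(-a) being inverse to rho_a,
   together with -omega = omega in characteristic 2. *)

definition frobenius_P1 :: "nat \<Rightarrow> 'a::field option \<Rightarrow> 'a option" where
  "frobenius_P1 q = map_option (\<lambda>x. x ^ q)"

definition P1_inverse :: "'a::field option \<Rightarrow> 'a option" where
  "P1_inverse P = (case P of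
       None \<Rightarrow> Some 0
     | Some x \<Rightarrow> (if x = 0 then None else Some (inverse x)))"

lemma P1_inverse_P1_inverse [simp]: "P1_inverse (P1_inverse P) = P"
  by (cases P) (auto simp: P1_inverse_def)

lemma P1_Fq_eq_fixed_points: "P1_Fq q = {P. frobenius_P1 q P = P}"
proof -
  have "P \<in> P1_Fq q \<longleftrightarrow> frobenius_P1 q P = P" for P :: "'a option"
    by (cases P) (auto simp: P1_Fq_def frobenius_P1_def)
  then show ?thesis by blast
qed

lemma mu_eq_frobenius_P1_inverse: "mu q = {P. frobenius_P1 q P = P1_inverse P}"
proof -
  have "P \<in> mu q \<longleftrightarrow> frobenius_P1 q P = P1_inverse P" for P :: "'a option"
    by (cases P) (auto simp: mu_def frobenius_P1_def P1_inverse_def field_simps)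
  then show ?thesis by blast
qed

lemma rho_uminus_rho:
  fixes a :: "'a::field"
  assumes "a\<^sup>2 \<noteq> 1"
  shows "rho (-a) (rho a P) = P"
proof (cases P)
  case (Some x)
  show ?thesis
  proof (cases "x + a = 0")
    case True
    then have "x = -a" by (simp add: eq_neg_iff_add_eq_0)
    then show ?thesis using Some by (simp add: rho_def)
  next
    case False
    have det: "1 - a * a \<noteq> 0" using assms by (simp add: power2_eq_square)
    have "(a * x + 1) / (x + a) - a = (1 - a * a) / (x + a)"
      using False by (simp add: field_simps)
    moreover have "1 - a * ((a * x + 1) / (x + a)) = x * (1 - a * a) / (x + a)"
      using False by (simp add: field_simps)
    ultimately show ?thesis using Some False det by (simp add: rho_def)
  qed
qed (simp add: rho_def)

lemma inj_on_rho: "(a::'a::field)\<^sup>2 \<noteq> 1 \<Longrightarrow> inj_on (rho a) A"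
  by (rule inj_on_inverseI) (rule rho_uminus_rho)

lemma rho_image_eq:
  fixes a :: "'a::field"
  assumes "a\<^sup>2 \<noteq> 1" "rho a ` A \<subseteq> B" "rho (-a) ` B \<subseteq> A"
  shows "rho a ` A = B"
proof
  show "B \<subseteq> rho a ` A"
  proof
    fix P assume "P \<in> B"
    moreover have "rho a (rho (-a) P) = P"
      using rho_uminus_rho[of "-a" P] assms(1) by simp
    ultimately show "P \<in> rho a ` A" using assms(3) by (metis image_subset_iff rev_image_eqI)
  qed
qed (fact assms(2))

lemma rho_Some_inverse:
  fixes a x :: "'a::field"
  assumes "x \<noteq> 0"
  shows "rho a (Some (inverse x)) = (if a * x + 1 = 0 then None else Some ((x + a) / (a * x + 1)))"
proof -
  have "inverse x + a = (a * x + 1) / x" "a * inverse x + 1 = (x + a) / x"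
    using assms by (simp_all add: field_simps)
  then show ?thesis using assms by (simp add: rho_def)
qed

lemma rho_P1_inverse:
  fixes a :: "'a::field"
  assumes "a\<^sup>2 \<noteq> 1"
  shows "rho a (P1_inverse P) = P1_inverse (rho a P)"
proof (cases P)
  case None
  then show ?thesis by (simp add: rho_def P1_inverse_def inverse_eq_divide)
next
  case (Some x)
  show ?thesis
  proof (cases "x = 0")
    case True
    then show ?thesis using Some by (simp add: rho_def P1_inverse_def)
  next
    case x: False
    have "a * x + 1 \<noteq> 0" if "x + a = 0"
    proof -
      have "x = -a" using that by (simp add: eq_neg_iff_add_eq_0)
      then show ?thesis using assms by (simp add: power2_eq_square)
    qed
    moreover have "rho a (P1_inverse P) =
        (if a * x + 1 = 0 then None else Some ((x + a) / (a * x + 1)))"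
      using Some x by (simp add: P1_inverse_def rho_Some_inverse)
    ultimately show ?thesis using Some x by (auto simp: rho_def P1_inverse_def)
  qed
qed

lemma rho_inverse:
  fixes a :: "'a::field"
  assumes "a \<noteq> 0"
  shows "rho (inverse a) P = rho a (P1_inverse P)"
proof (cases P)
  case (Some x)
  show ?thesis
  proof (cases "x = 0")
    case False
    have "x + inverse a = (a * x + 1) / a" "inverse a * x + 1 = (x + a) / a"
      using assms by (simp_all add: field_simps)
    then have "rho (inverse a) (Some x) = rho a (Some (inverse x))"
      unfolding rho_Some_inverse[OF False] using assms by (simp add: rho_def)
    then show ?thesis using Some False by (simp add: P1_inverse_def)
  qed (use Some assms in \<open>simp add: rho_def P1_inverse_def inverse_eq_divide\<close>)
qed (use assms in \<open>simp add: rho_def P1_inverse_def inverse_eq_divide\<close>)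

context
  fixes q :: nat
  assumes power_q_add: "\<And>x y :: 'a::field. (x + y) ^ q = x ^ q + y ^ q"
begin

lemma power_q_pos: "q > 0"
proof -
  have "(0 + 0 :: 'a) ^ q = 0 ^ q + 0 ^ q" by (rule power_q_add)
  then have "(0 :: 'a) ^ q = 0" by (metis add_cancel_right_right)
  then show ?thesis by (simp add: power_0_left split: if_splits)
qed

lemma power_q_uminus: "(- x :: 'a) ^ q = - (x ^ q)"
proof -
  have "x ^ q + (- x) ^ q = (x + - x) ^ q" by (rule power_q_add[symmetric])
  also have "\<dots> = 0" using power_q_pos by simp
  finally show ?thesis by (simp add: eq_neg_iff_add_eq_0 add.commute)
qed

lemma power_q_Suc_uminus: "(- x :: 'a) ^ (q + 1) = x ^ (q + 1)"
  by (simp only: power_add power_one_right power_q_uminus minus_mult_minus)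

lemma frobenius_P1_rho: "frobenius_P1 q (rho (a :: 'a) P) = rho (a ^ q) (frobenius_P1 q P)"
proof (cases P)
  case (Some x)
  have "x ^ q + a ^ q = (x + a) ^ q" by (rule power_q_add[symmetric])
  then have "x ^ q + a ^ q = 0 \<longleftrightarrow> x + a = 0" using power_q_pos by simp
  moreover have "((a * x + 1) / (x + a)) ^ q = (a ^ q * x ^ q + 1) / (x ^ q + a ^ q)"
    by (simp only: power_divide power_q_add power_mult_distrib power_one)
  ultimately show ?thesis using Some by (simp add: frobenius_P1_def rho_def)
qed (simp add: frobenius_P1_def rho_def)

lemma rho_P1_Fq_subset:
  assumes "a ^ q = (a :: 'a)"
  shows "rho a ` P1_Fq q \<subseteq> P1_Fq q"
  using assms by (auto simp: P1_Fq_eq_fixed_points frobenius_P1_rho)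

lemma rho_mu_subset:
  assumes "a ^ q = (a :: 'a)" "a\<^sup>2 \<noteq> 1"
  shows "rho a ` mu q \<subseteq> mu q"
  using assms by (auto simp: mu_eq_frobenius_P1_inverse frobenius_P1_rho rho_P1_inverse)

lemma frobenius_P1_rho_of_root_of_unity:
  assumes "a ^ (q + 1) = (1 :: 'a)"
  shows "frobenius_P1 q (rho a P) = rho a (P1_inverse (frobenius_P1 q P))"
proof -
  have a_nonzero: "a \<noteq> 0" using assms by auto
  then have "a ^ q = inverse a" using assms by (simp add: field_simps)
  then show ?thesis using a_nonzero by (simp add: frobenius_P1_rho rho_inverse)
qed

lemma rho_P1_Fq_subset_mu:
  assumes "a ^ (q + 1) = (1 :: 'a)" "a\<^sup>2 \<noteq> 1"
  shows "rho a ` P1_Fq q \<subseteq> mu q"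
  using assms by (auto simp: P1_Fq_eq_fixed_points mu_eq_frobenius_P1_inverse
      frobenius_P1_rho_of_root_of_unity rho_P1_inverse)

lemma rho_mu_subset_P1_Fq:
  assumes "a ^ (q + 1) = (1 :: 'a)"
  shows "rho a ` mu q \<subseteq> P1_Fq q"
  using assms by (auto simp: P1_Fq_eq_fixed_points mu_eq_frobenius_P1_inverse
      frobenius_P1_rho_of_root_of_unity)

lemma bij_betw_rho_P1_Fq:
  assumes "a ^ q = (a :: 'a)" "a\<^sup>2 \<noteq> 1"
  shows "bij_betw (rho a) (P1_Fq q) (P1_Fq q)"
proof -
  have "(- a) ^ q = - a" using assms(1) by (simp add: power_q_uminus)
  then show ?thesis using assms
    unfolding bij_betw_def by (intro conjI inj_on_rho rho_image_eq rho_P1_Fq_subset) simp_all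
qed

lemma bij_betw_rho_mu:
  assumes "a ^ q = (a :: 'a)" "a\<^sup>2 \<noteq> 1"
  shows "bij_betw (rho a) (mu q) (mu q)"
proof -
  have "(- a) ^ q = - a" using assms(1) by (simp add: power_q_uminus)
  then show ?thesis using assms
    unfolding bij_betw_def by (intro conjI inj_on_rho rho_image_eq rho_mu_subset) simp_all
qed

lemma rho_image_P1_Fq:
  assumes "a ^ (q + 1) = (1 :: 'a)" "a\<^sup>2 \<noteq> 1"
  shows "rho a ` P1_Fq q = mu q"
proof -
  have "(- a) ^ (q + 1) = 1" using assms(1) by (simp only: power_q_Suc_uminus)
  then show ?thesis
    using assms by (intro rho_image_eq rho_P1_Fq_subset_mu rho_mu_subset_P1_Fq) simp_all
qed

lemma rho_image_mu:
  assumes "a ^ (q + 1) = (1 :: 'a)" "a\<^sup>2 \<noteq> 1"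
  shows "rho a ` mu q = P1_Fq q"
proof -
  have "(- a) ^ (q + 1) = 1" using assms(1) by (simp only: power_q_Suc_uminus)
  then show ?thesis
    using assms by (intro rho_image_eq rho_P1_Fq_subset_mu rho_mu_subset_P1_Fq) simp_all
qed

end

lemma of_nat_prime_eq_0_iff_dvd_CHAR_power:
  assumes "prime r" "prime CHAR('a::semiring_1)" "n > 0"
  shows "(of_nat r :: 'a) = 0 \<longleftrightarrow> r dvd CHAR('a) ^ n"
  using assms by (metis of_nat_eq_0_iff_char_dvd primes_dvd_imp_eq prime_dvd_power_iff dvd_refl)

lemma power_mod_eq:
  fixes x :: "'a::monoid_mult"
  assumes "x ^ k = 1"
  shows "x ^ n = x ^ (n mod k)"
proof -
  have "x ^ n = (x ^ k) ^ (n div k) * x ^ (n mod k)"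
    by (simp flip: power_mult power_add)
  then show ?thesis using assms by simp
qed

lemma cube_root_of_unity_cube:
  fixes \<omega> :: "'a::comm_ring_1"
  assumes "\<omega>\<^sup>2 + \<omega> + 1 = 0"
  shows "\<omega> ^ 3 = 1"
proof -
  have "\<omega> ^ 3 - 1 = (\<omega> - 1) * (\<omega>\<^sup>2 + \<omega> + 1)"
    by (simp add: algebra_simps power2_eq_square power3_eq_cube)
  then show ?thesis using assms by simp
qed

lemma cube_root_of_unity_square_neq_1:
  fixes \<omega> :: "'a::comm_ring_1"
  assumes "\<omega>\<^sup>2 + \<omega> + 1 = 0" "(3 :: 'a) \<noteq> 0"
  shows "\<omega>\<^sup>2 \<noteq> 1"
proof
  assume "\<omega>\<^sup>2 = 1"
  with assms(1) have "\<omega> = -2" by (simp add: algebra_simps eq_neg_iff_add_eq_0)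
  with \<open>\<omega>\<^sup>2 = 1\<close> have "(3 :: 'a) + 1 = 0 + 1" by (simp add: power2_eq_square)
  then have "(3 :: 'a) = 0" by (rule add_right_imp_eq)
  with assms(2) show False by contradiction
qed

theorem corollary2p5:
  fixes \<omega> :: "'a::alg_closed_field" and p n q :: nat
  assumes char: "prime p" "CHAR('a) = p"
    and algebraic: "\<forall>x::'a. \<exists>k>0. x ^ (p ^ k) = x"
    and qdef: "q = p ^ n" "n > 0"
    and coprime3: "gcd 3 q = 1"
    and omega: "\<omega>\<^sup>2 + \<omega> + 1 = 0"
  shows "(q mod 3 = 1 \<longrightarrow>
            bij_betw (rho \<omega>) (P1_Fq q) (P1_Fq q) \<and> bij_betw (rho \<omega>) (mu q) (mu q))
       \<and> (q mod 3 = 2 \<longrightarrow>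
            rho \<omega> ` (P1_Fq q) = mu q \<and> rho \<omega> ` (mu q) = P1_Fq q)
       \<and> (even q \<longrightarrow> (\<forall>P. rho \<omega> (rho \<omega> P) = P))"
proof -
  have char_prime: "prime CHAR('a)" using char by simp
  have frobenius_add: "(x + y) ^ q = x ^ q + y ^ q" for x y :: 'a
    using freshmans_dream'[OF char_prime] qdef char(2) by simp
  have char_dvd_q: "(of_nat r :: 'a) = 0 \<longleftrightarrow> r dvd q" if "prime r" for r
    using of_nat_prime_eq_0_iff_dvd_CHAR_power[OF that char_prime qdef(2)] qdef char(2) by simp
  have "(3 :: 'a) \<noteq> 0" using char_dvd_q[of 3] coprime3 by auto
  then have nondeg: "\<omega>\<^sup>2 \<noteq> 1" by (rule cube_root_of_unity_square_neq_1[OF omega])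
  have omega_q: "\<omega> ^ q = \<omega> ^ (q mod 3)"
    by (rule power_mod_eq[OF cube_root_of_unity_cube[OF omega]])
  show ?thesis
  proof (intro conjI impI allI)
    assume "q mod 3 = 1"
    then have "\<omega> ^ q = \<omega>" using omega_q by simp
    then show "bij_betw (rho \<omega>) (P1_Fq q) (P1_Fq q)" "bij_betw (rho \<omega>) (mu q) (mu q)"
      using bij_betw_rho_P1_Fq[OF frobenius_add] bij_betw_rho_mu[OF frobenius_add] nondeg by blast+
  next
    assume "q mod 3 = 2"
    then have "\<omega> ^ (q + 1) = 1"
      using omega_q cube_root_of_unity_cube[OF omega]
      by (simp add: power3_eq_cube power2_eq_square mult.assoc)
    then show "rho \<omega> ` P1_Fq q = mu q" "rho \<omega> ` mu q = P1_Fq q"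
      using rho_image_P1_Fq[OF frobenius_add] rho_image_mu[OF frobenius_add] nondeg by blast+
  next
    fix P
    assume "even q"
    then have "(2 :: 'a) = 0" using char_dvd_q[of 2] by simp
    then have "- \<omega> = \<omega>" by (simp add: eq_neg_iff_add_eq_0 flip: mult_2)
    then show "rho \<omega> (rho \<omega> P) = P" using rho_uminus_rho[OF nondeg] by metis
  qed
qed

end
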